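(* Let $(M,\boldsymbol p)$ be a projective manifold and suppose $\tau\in\Gamma(\mathcal E(2))$ solves $$\nabla_{(a}\nabla_b\nabla_{c)}\tau+4\mathsf P_{(ab}\nabla_{c)}\tau+2\tau\nabla_{(a}\mathsf P_{bc)}=0$$ (not necessarily a normal solution). Let $H_{\alpha\beta}:=\tau Y_\alpha Y_\beta+\nabla_c\tau\,Y_{(\alpha}Z_{\beta)}{}^c+Z_\alpha{}^aZ_\beta{}^b\big(\tfrac12\nabla_a\nabla_b\tau+\mathsf P_{ab}\tau\big)$ (which equals $\frac12D_\alpha D_\beta\tau$ and is projectively invariant). Then along every unparametrised geodesic $\gamma$, with weighted velocity $\mathbf u$ satisfying $\mathbf u^b\nabla_b\mathbf u^a=0$ and $\Sigma^{\alpha\beta}=2X^{[\alpha}W^{\beta]}{}_b\mathbf u^b$, the quantity $$\eta:=\Sigma^{\alpha_1\beta_1}\Sigma^{\alpha_2\beta_2}H_{\alpha_1\alpha_2}H_{\beta_1\beta_2}=\tau\,\mathbf u^a\mathbf u^b\nabla_a\nabla_b\tau+2\mathbf u^a\mathbf u^b\mathsf P_{ab}\tau^2-\tfrac12(\mathbf u^a\nabla_a\tau)^2$$ is constant. Moreover $k_{bc}:=\tau\nabla_b\nabla_c\tau+2\mathsf P_{bc}\tau^2-\frac12(\nabla_b\tau)(\nabla_c\tau)\in\Gamma(\odot^2T^*M(4))$ (symmetric part understood) satisfies the Killing equation $\nabla_{(a}k_{bc)}=0$.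
   Context: $(M,\boldsymbol p)$ projective manifold of dimension $n\ge2$; $\nabla\in\boldsymbol p$ any connection of the class (torsion-free affine connections related by $\hat\nabla_a\xi^b=\nabla_a\xi^b+\Upsilon_a\xi^b+\delta^b{}_a\Upsilon_c\xi^c$). Densities $\mathcal E(w):=\big((\Lambda^nTM)^{\otimes 2}\big)^{w/(2n+2)}$, $B(w):=B\otimes\mathcal E(w)$. Projective Schouten tensor $\mathsf P_{ab}$ of $\nabla$: $R_{ab}{}^c{}_d=W_{ab}{}^c{}_d+2\delta^c{}_{[a}\mathsf P_{b]d}+\beta_{ab}\delta^c{}_d$ with $W$ totally trace-free and $\beta_{ab}=-2\mathsf P_{[ab]}$, where $[\nabla_a,\nabla_b]v^c=R_{ab}{}^c{}_dv^d$. Projective tractors: $\mathcal T^*=J^1\mathcal E(1)$, $\mathcal T$ dual; canonical tractor $X^\alpha\in\Gamma(\mathcal T(1))$; a choice of $\nabla$ gives $Y_\alpha\in\Gamma(\mathcal T^*(-1))$, $Z_\alpha{}^a\in\Gamma(\mathcal T^*\otimes TM(1))$, $W^\alpha{}_a\in\Gamma(\mathcal T\otimes T^*M(-1))$ with $X^\alpha Y_\alpha=1$, $Z_\alpha{}^bW^\alpha{}_a=\delta^b{}_a$, $Y_\alpha W^\alpha{}_a=0$, $X^\alpha Z_\alpha{}^a=0$; tractor connection $\nabla_aX^\beta=W^\beta{}_a$, $\nabla_aW^\beta{}_b=-\mathsf P_{ab}X^\beta$, $\nabla_aY_\beta=\mathsf P_{ab}Z_\beta{}^b$, $\nabla_aZ_\beta{}^b=-\delta^b{}_aY_\beta$.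 Thomas-D operator $D_\alpha\sigma=wY_\alpha\sigma+Z_\alpha{}^a\nabla_a\sigma$ on $\mathcal E(w)$ (coupled to tractors). An unparametrised geodesic is an oriented curve admitting (locally) a parametrisation that is a geodesic of some/any $\nabla\in\boldsymbol p$; equivalently it carries a nowhere-vanishing $\mathbf u^a\in\Gamma(T\gamma(-2))$ with $\mathbf u^b\nabla_b\mathbf u^a=0$. *)

theory Defs
  imports "HOL-Analysis.Analysis"
begin

text \<open>The manifold is an open set U of real^'n (n = CARD('n));
  all bundles are trivialised by the coordinate frame, and densities of weight w by
  eps^w, where eps = (vol (x) vol)^(1/(2n+2)), vol = d_1 ^ ... ^ d_n.
  A connection is given by Christoffel symbols: Gam i j k = Gamma^k_(ij).
  Weighted covariant tensors are functions of an index list and a point.\<close>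

definition pd :: "'n::finite \<Rightarrow> (real^'n \<Rightarrow> real) \<Rightarrow> real^'n \<Rightarrow> real" where
  "pd i f x = deriv (\<lambda>t. f (x + t *\<^sub>R axis i 1)) 0"

definition iter_pd :: "'n::finite list \<Rightarrow> (real^'n \<Rightarrow> real) \<Rightarrow> real^'n \<Rightarrow> real" where
  "iter_pd is f = foldr pd is f"

definition smooth_on_open :: "(real^'n::finite) set \<Rightarrow> (real^'n \<Rightarrow> real) \<Rightarrow> bool" where
  "smooth_on_open U f \<longleftrightarrow> (\<forall>is. iter_pd is f differentiable_on U)"

definition cov :: "('n::finite \<Rightarrow> 'n \<Rightarrow> 'n \<Rightarrow> real^'n \<Rightarrow> real) \<Rightarrow> real
    \<Rightarrow> ('n list \<Rightarrow> real^'n \<Rightarrow> real) \<Rightarrow> ('n list \<Rightarrow> real^'n \<Rightarrow> real)" where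
  "cov Gam w T = (\<lambda>is x. case is of [] \<Rightarrow> 0 | a # bs \<Rightarrow>
      pd a (T bs) x
      - (\<Sum>j<length bs. \<Sum>e\<in>UNIV. Gam a (bs ! j) e x * T (bs[j := e]) x)
      + w / (real CARD('n) + 1) * (\<Sum>e\<in>UNIV. Gam a e e x) * T bs x)"

definition scal :: "(real^'n::finite \<Rightarrow> real) \<Rightarrow> 'n list \<Rightarrow> real^'n \<Rightarrow> real" where
  "scal f = (\<lambda>_ x. f x)"

definition ten2 :: "('n::finite \<Rightarrow> 'n \<Rightarrow> real^'n \<Rightarrow> real) \<Rightarrow> 'n list \<Rightarrow> real^'n \<Rightarrow> real" where
  "ten2 P = (\<lambda>is x. P (is ! 0) (is ! 1) x)"

text \<open>Curvature: [nabla_a, nabla_b] v^c = Riem a b c d v^d.\<close>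
definition Riem :: "('n::finite \<Rightarrow> 'n \<Rightarrow> 'n \<Rightarrow> real^'n \<Rightarrow> real) \<Rightarrow> 'n \<Rightarrow> 'n \<Rightarrow> 'n \<Rightarrow> 'n \<Rightarrow> real^'n \<Rightarrow> real" where
  "Riem Gam a b c d x = pd a (Gam b d c) x - pd b (Gam a d c) x
     + (\<Sum>e\<in>UNIV. Gam a e c x * Gam b d e x) - (\<Sum>e\<in>UNIV. Gam b e c x * Gam a d e x)"

definition Ric :: "('n::finite \<Rightarrow> 'n \<Rightarrow> 'n \<Rightarrow> real^'n \<Rightarrow> real) \<Rightarrow> 'n \<Rightarrow> 'n \<Rightarrow> real^'n \<Rightarrow> real" where
  "Ric Gam b d x = (\<Sum>a\<in>UNIV. Riem Gam a b a d x)"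

text \<open>Projective Schouten tensor: the unique P with R = W + 2 delta P + beta delta,
  W totally trace-free, beta = -2 P_[ab]; explicitly P = Ric_(sym)/(n-1) + Ric_(alt)/(n+1).\<close>
definition Sch :: "('n::finite \<Rightarrow> 'n \<Rightarrow> 'n \<Rightarrow> real^'n \<Rightarrow> real) \<Rightarrow> 'n \<Rightarrow> 'n \<Rightarrow> real^'n \<Rightarrow> real" where
  "Sch Gam b d x = (Ric Gam b d x + Ric Gam d b x) / (2 * (real CARD('n) - 1))
                 + (Ric Gam b d x - Ric Gam d b x) / (2 * (real CARD('n) + 1))"

definition sym3 :: "('n \<Rightarrow> 'n \<Rightarrow> 'n \<Rightarrow> real) \<Rightarrow> 'n \<Rightarrow> 'n \<Rightarrow> 'n \<Rightarrow> real" where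
  "sym3 f a b c = (f a b c + f a c b + f b a c + f b c a + f c a b + f c b a) / 6"

definition D1 where "D1 Gam tau = cov Gam 2 (scal tau)"
definition D2 where "D2 Gam tau = cov Gam 2 (cov Gam 2 (scal tau))"
definition D3 where "D3 Gam tau = cov Gam 2 (cov Gam 2 (cov Gam 2 (scal tau)))"

definition third_order_eq :: "('n::finite \<Rightarrow> 'n \<Rightarrow> 'n \<Rightarrow> real^'n \<Rightarrow> real) \<Rightarrow> (real^'n) set
    \<Rightarrow> (real^'n \<Rightarrow> real) \<Rightarrow> bool" where
  "third_order_eq Gam U tau \<longleftrightarrow> (\<forall>x\<in>U. \<forall>a b c. sym3 (\<lambda>a b c.
       D3 Gam tau [a, b, c] x + 4 * Sch Gam a b x * D1 Gam tau [c] x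
       + 2 * tau x * cov Gam 0 (ten2 (Sch Gam)) [a, b, c] x) a b c = 0)"

definition kraw where
  "kraw Gam tau b c x = tau x * D2 Gam tau [b, c] x + 2 * Sch Gam b c x * (tau x)^2
      - 1/2 * D1 Gam tau [b] x * D1 Gam tau [c] x"

definition kten where
  "kten Gam tau = ten2 (\<lambda>b c x. (kraw Gam tau b c x + kraw Gam tau c b x) / 2)"

text \<open>Curve c on the interval I with velocity c', and weighted velocity
  u = s c' (x) eps^(-2) in T gamma(-2), nowhere vanishing, with u^b nabla_b u^a = 0,
  where u^b nabla_b = s D/dt and for a weight -2 vector field along the curve
  D/dt u^a = du^a/dt + Gamma^a_(be) c'^b u^e - 2/(n+1) Gamma^e_(be) c'^b u^a.\<close>
definition weighted_geod :: "('n::finite \<Rightarrow> 'n \<Rightarrow> 'n \<Rightarrow> real^'n \<Rightarrow> real) \<Rightarrow> (real^'n) set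
    \<Rightarrow> real set \<Rightarrow> (real \<Rightarrow> real^'n) \<Rightarrow> (real \<Rightarrow> real^'n) \<Rightarrow> (real \<Rightarrow> real)
    \<Rightarrow> (real \<Rightarrow> real^'n) \<Rightarrow> (real \<Rightarrow> real^'n) \<Rightarrow> bool" where
  "weighted_geod Gam U I c c' s u u' \<longleftrightarrow> (\<forall>t\<in>I.
      c t \<in> U \<and> (c has_vector_derivative c' t) (at t) \<and> c' t \<noteq> 0 \<and>
      s t \<noteq> 0 \<and> u t = s t *\<^sub>R c' t \<and> (u has_vector_derivative u' t) (at t) \<and>
      (\<forall>a. s t * (u' t $ a
                 + (\<Sum>b\<in>UNIV. \<Sum>e\<in>UNIV. Gam b e a (c t) * c' t $ b * u t $ e)
                 - 2 / (real CARD('n) + 1) * (\<Sum>b\<in>UNIV. \<Sum>e\<in>UNIV. Gam b e e (c t) * c' t $ b)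
                     * u t $ a) = 0))"

definition eta_formula where
  "eta_formula Gam tau x (uv :: real^'n::finite) =
     tau x * (\<Sum>a\<in>UNIV. \<Sum>b\<in>UNIV. uv $ a * uv $ b * D2 Gam tau [a, b] x)
     + 2 * (\<Sum>a\<in>UNIV. \<Sum>b\<in>UNIV. uv $ a * uv $ b * Sch Gam a b x) * (tau x)^2
     - 1/2 * (\<Sum>a\<in>UNIV. uv $ a * D1 Gam tau [a] x)^2"

text \<open>Tractor components in the splitting determined by nabla: index None stands for the
  Y_alpha (resp. X^alpha) slot, Some a for Z_alpha^a (resp. W^alpha_a).\<close>
definition Htr :: "('n::finite \<Rightarrow> 'n \<Rightarrow> 'n \<Rightarrow> real^'n \<Rightarrow> real) \<Rightarrow> (real^'n \<Rightarrow> real) \<Rightarrow> real^'n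
    \<Rightarrow> 'n option \<Rightarrow> 'n option \<Rightarrow> real" where
  "Htr Gam tau x i j = (case (i, j) of
       (None, None) \<Rightarrow> tau x
     | (None, Some c) \<Rightarrow> 1/2 * D1 Gam tau [c] x
     | (Some c, None) \<Rightarrow> 1/2 * D1 Gam tau [c] x
     | (Some a, Some b) \<Rightarrow> 1/2 * D2 Gam tau [a, b] x + Sch Gam a b x * tau x)"

definition Sig :: "real^'n::finite \<Rightarrow> 'n option \<Rightarrow> 'n option \<Rightarrow> real" where
  "Sig uv i j = (case (i, j) of
       (None, Some b) \<Rightarrow> uv $ b
     | (Some b, None) \<Rightarrow> - (uv $ b)
     | _ \<Rightarrow> 0)"

definition eta_tractor where
  "eta_tractor Gam tau x (uv :: real^'n::finite) =
     (\<Sum>i1\<in>UNIV. \<Sum>j1\<in>UNIV. \<Sum>i2\<in>UNIV. \<Sum>j2\<in>UNIV.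
        Sig uv i1 j1 * Sig uv i2 j2 * Htr Gam tau x i1 i2 * Htr Gam tau x j1 j2)"

end

theory Submission
  imports Defs
begin

(* Write k = tau nabla nabla tau + 2 P tau^2 - 1/2 nabla tau (x) nabla tau as a sum of tensor
   products of densities.  The Leibniz rule gives
     nabla_a k_bc = tau (nabla_a nabla_b nabla_c tau + 4 P_bc nabla_a tau + 2 tau nabla_a P_bc)
                    + nabla_a tau nabla_b nabla_c tau
                    - 1/2 (nabla_a nabla_b tau nabla_c tau + nabla_b tau nabla_a nabla_c tau),
   and the last three terms cancel under symmetrisation, so nabla_(a k_bc) is tau times the
   left-hand side of the third-order equation: k is a Killing tensor.  Along a weighted geodesic
   eta = u^b u^c k_bc, and because u^b nabla_b u^a = 0 the derivative of eta is a multiple of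
   u^a u^b u^c nabla_a k_bc = u^a u^b u^c nabla_(a k_bc) = 0.  That eta is also the contraction of
   Sigma and H is a finite computation in the splitting Y, Z. *)

section \<open>Partial derivatives\<close>

lemma pd_has_derivative:
  assumes "(f has_derivative f') (at x)"
  shows "((\<lambda>t. f (x + t *\<^sub>R axis i 1)) has_real_derivative f' (axis i 1)) (at 0)"
    and "pd i f x = f' (axis i 1)"
proof -
  have line: "((\<lambda>t::real. x + t *\<^sub>R axis i 1) has_derivative (\<lambda>h. h *\<^sub>R axis i 1)) (at 0)"
    by (auto intro!: derivative_eq_intros)
  have "((\<lambda>t. f (x + t *\<^sub>R axis i 1)) has_derivative (\<lambda>h. f' (h *\<^sub>R axis i 1))) (at 0)"
    using diff_chain_at[OF line] assms by (simp add: o_def)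
  moreover have "(\<lambda>h. f' (h *\<^sub>R axis i 1)) = (\<lambda>h. f' (axis i 1) * h)"
    using has_derivative_linear[OF assms] by (simp add: linear_scale fun_eq_iff)
  ultimately show D: "((\<lambda>t. f (x + t *\<^sub>R axis i 1)) has_real_derivative f' (axis i 1)) (at 0)"
    by (simp add: has_field_derivative_def)
  then show "pd i f x = f' (axis i 1)"
    unfolding pd_def by (rule DERIV_imp_deriv)
qed

lemma has_real_derivative_pd:
  assumes "f differentiable (at x)"
  shows "((\<lambda>t. f (x + t *\<^sub>R axis i 1)) has_real_derivative pd i f x) (at 0)"
  using assms pd_has_derivative unfolding differentiable_def by metis

lemma pd_cong_open:
  assumes "open U" "x \<in> U" "\<And>y. y \<in> U \<Longrightarrow> f y = g y"
  shows "pd i f x = pd i g x"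
proof -
  have "open ((\<lambda>t::real. x + t *\<^sub>R axis i 1) -` U)"
    by (rule continuous_open_vimage) (auto intro!: continuous_intros assms(1))
  then have "\<forall>\<^sub>F t in nhds 0. x + t *\<^sub>R axis i 1 \<in> U"
    using eventually_nhds_in_open[of _ 0] assms(2) by fastforce
  then have "\<forall>\<^sub>F t in nhds 0. f (x + t *\<^sub>R axis i 1) = g (x + t *\<^sub>R axis i 1)"
    by eventually_elim (simp add: assms(3))
  then show ?thesis
    unfolding pd_def by (rule deriv_cong_ev) simp
qed

lemma pd_add:
  assumes "f differentiable (at x)" "g differentiable (at x)"
  shows "pd i (\<lambda>y. f y + g y) x = pd i f x + pd i g x"
  unfolding pd_def[of i "\<lambda>y. f y + g y"]
  by (intro DERIV_imp_deriv DERIV_add has_real_derivative_pd assms)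

lemma pd_mult:
  assumes "f differentiable (at x)" "g differentiable (at x)"
  shows "pd i (\<lambda>y. f y * g y) x = pd i f x * g x + f x * pd i g x"
  using DERIV_mult[OF has_real_derivative_pd[OF assms(1)] has_real_derivative_pd[OF assms(2)]]
  unfolding pd_def[of i "\<lambda>y. f y * g y"] by (simp add: DERIV_imp_deriv mult.commute)

lemma pd_const: "pd i (\<lambda>y. c) = (\<lambda>y. 0)"
  unfolding pd_def[abs_def] by simp

lemma pd_cmult:
  assumes "f differentiable (at x)"
  shows "pd i (\<lambda>y. c * f y) x = c * pd i f x"
  using pd_mult[of "\<lambda>y. c" x f i] assms by (simp add: pd_const)

lemma pd_chain:
  assumes "f differentiable (at (c t))" "(c has_vector_derivative v) (at t)"
  shows "((\<lambda>t. f (c t)) has_real_derivative (\<Sum>a\<in>UNIV. v $ a * pd a f (c t))) (at t)"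
proof -
  obtain f' where f': "(f has_derivative f') (at (c t))"
    using assms(1) differentiable_def by blast
  have "((f \<circ> c) has_derivative (\<lambda>h. f' (h *\<^sub>R v))) (at t)"
    using diff_chain_at[OF assms(2)[unfolded has_vector_derivative_def] f'] by (simp add: o_def)
  moreover have "(\<lambda>h. f' (h *\<^sub>R v)) = (*) (\<Sum>a\<in>UNIV. v $ a * pd a f (c t))"
  proof -
    have "f' v = f' (\<Sum>a\<in>UNIV. v $ a *\<^sub>R axis a 1)"
      using basis_expansion[of v] by (simp add: scalar_mult_eq_scaleR)
    then have "f' v = (\<Sum>a\<in>UNIV. v $ a * f' (axis a 1))"
      using has_derivative_linear[OF f'] by (simp add: linear_sum linear_scale)
    then show ?thesis
      using has_derivative_linear[OF f'] pd_has_derivative(2)[OF f']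
      by (simp add: linear_scale fun_eq_iff mult.commute)
  qed
  ultimately show ?thesis
    by (simp add: has_field_derivative_def o_def)
qed

lemma has_real_derivative_vec_nth:
  assumes "(u has_vector_derivative u') (at t)"
  shows "((\<lambda>t. u t $ b) has_real_derivative u' $ b) (at t)"
  using bounded_linear.has_vector_derivative[OF bounded_linear_vec_nth assms]
  by (simp add: has_real_derivative_iff_has_vector_derivative)

section \<open>Smooth functions\<close>

lemma differentiable_on_cong:
  assumes "f differentiable_on S" "\<And>x. x \<in> S \<Longrightarrow> f x = g x"
  shows "g differentiable_on S"
  using assms has_derivative_transform[of _ S g f]
  unfolding differentiable_on_def differentiable_def by metis

(* A graded version of smooth_on_open, so that closure properties can be proved by induction
   on the order of differentiation. *)
definition pd_differentiable_upto :: "nat \<Rightarrow> (real^'n::finite) set \<Rightarrow> (real^'n \<Rightarrow> real) \<Rightarrow> bool" where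
  "pd_differentiable_upto n U f \<longleftrightarrow> (\<forall>is. length is \<le> n \<longrightarrow> iter_pd is f differentiable_on U)"

lemma smooth_on_open_iff_pd_differentiable_upto:
  "smooth_on_open U f \<longleftrightarrow> (\<forall>n. pd_differentiable_upto n U f)"
  unfolding smooth_on_open_def pd_differentiable_upto_def by blast

lemma pd_differentiable_upto_0:
  "pd_differentiable_upto 0 U f \<longleftrightarrow> f differentiable_on U"
  by (simp add: pd_differentiable_upto_def iter_pd_def)

lemma iter_pd_Nil [simp]: "iter_pd [] f = f"
  by (simp add: iter_pd_def)

lemma iter_pd_snoc [simp]: "iter_pd (is @ [i]) f = iter_pd is (pd i f)"
  by (simp add: iter_pd_def)

lemma pd_differentiable_upto_Suc:
  "pd_differentiable_upto (Suc n) U f \<longleftrightarrow>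
     f differentiable_on U \<and> (\<forall>i. pd_differentiable_upto n U (pd i f))"
proof
  assume H: "pd_differentiable_upto (Suc n) U f"
  have "iter_pd [] f differentiable_on U"
    using H[unfolded pd_differentiable_upto_def, rule_format, of "[]"] by simp
  moreover have "iter_pd (is @ [i]) f differentiable_on U" if "length is \<le> n" for "is" i
    using H[unfolded pd_differentiable_upto_def, rule_format, of "is @ [i]"] that by (simp del: iter_pd_snoc)
  ultimately show "f differentiable_on U \<and> (\<forall>i. pd_differentiable_upto n U (pd i f))"
    unfolding pd_differentiable_upto_def by simp
next
  assume H: "f differentiable_on U \<and> (\<forall>i. pd_differentiable_upto n U (pd i f))"
  show "pd_differentiable_upto (Suc n) U f"
    unfolding pd_differentiable_upto_def
  proof (intro allI impI)
    fix "is" :: "'a list"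
    assume "length is \<le> Suc n"
    then show "iter_pd is f differentiable_on U"
      using H by (cases "is" rule: rev_exhaust) (auto simp: pd_differentiable_upto_def)
  qed
qed

lemma pd_differentiable_upto_Suc_D: "pd_differentiable_upto (Suc n) U f \<Longrightarrow> pd_differentiable_upto n U f"
  unfolding pd_differentiable_upto_def by simp

lemma pd_differentiable_upto_cong:
  assumes "open U" "pd_differentiable_upto n U f" "\<And>y. y \<in> U \<Longrightarrow> f y = g y"
  shows "pd_differentiable_upto n U g"
  using assms(2,3)
proof (induction n arbitrary: f g)
  case 0
  then show ?case by (simp add: pd_differentiable_upto_0 differentiable_on_cong)
next
  case (Suc n)
  have "f differentiable_on U" "pd_differentiable_upto n U (pd i f)" for i
    using Suc.prems(1) by (simp_all add: pd_differentiable_upto_Suc)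
  moreover have "pd i f y = pd i g y" if "y \<in> U" for i y
    using pd_cong_open[OF assms(1) that Suc.prems(2)] .
  ultimately show ?case
    unfolding pd_differentiable_upto_Suc using Suc.IH Suc.prems(2) differentiable_on_cong by blast
qed

lemma pd_differentiable_upto_add:
  assumes "open U" "pd_differentiable_upto n U f" "pd_differentiable_upto n U g"
  shows "pd_differentiable_upto n U (\<lambda>y. f y + g y)"
  using assms(2,3)
proof (induction n arbitrary: f g)
  case 0
  then show ?case by (simp add: pd_differentiable_upto_0 differentiable_on_add)
next
  case (Suc n)
  have f: "f differentiable_on U" "pd_differentiable_upto n U (pd i f)"
    and g: "g differentiable_on U" "pd_differentiable_upto n U (pd i g)" for i
    using Suc.prems by (simp_all add: pd_differentiable_upto_Suc)
  have pd_sum: "pd i (\<lambda>y. f y + g y) y = pd i f y + pd i g y" if "y \<in> U" for i y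
    using f g that assms(1) by (simp add: pd_add differentiable_on_eq_differentiable_at)
  have "pd_differentiable_upto n U (pd i (\<lambda>y. f y + g y))" for i
    by (rule pd_differentiable_upto_cong[OF assms(1) Suc.IH[OF f(2) g(2)]]) (simp add: pd_sum)
  with f g show ?case
    by (simp add: pd_differentiable_upto_Suc differentiable_on_add)
qed

lemma pd_differentiable_upto_mult:
  assumes "open U" "pd_differentiable_upto n U f" "pd_differentiable_upto n U g"
  shows "pd_differentiable_upto n U (\<lambda>y. f y * g y)"
  using assms(2,3)
proof (induction n arbitrary: f g)
  case 0
  then show ?case by (simp add: pd_differentiable_upto_0 differentiable_on_mult)
next
  case (Suc n)
  have f: "f differentiable_on U" "pd_differentiable_upto n U (pd i f)"
    and g: "g differentiable_on U" "pd_differentiable_upto n U (pd i g)" for i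
    using Suc.prems by (simp_all add: pd_differentiable_upto_Suc)
  have pd_prod: "pd i (\<lambda>y. f y * g y) y = pd i f y * g y + f y * pd i g y" if "y \<in> U" for i y
    using f g that assms(1) by (simp add: pd_mult differentiable_on_eq_differentiable_at)
  have leibniz: "pd_differentiable_upto n U (\<lambda>y. pd i f y * g y + f y * pd i g y)" for i
    using pd_differentiable_upto_Suc_D[OF Suc.prems(1)] pd_differentiable_upto_Suc_D[OF Suc.prems(2)]
    by (intro pd_differentiable_upto_add assms(1) Suc.IH f g)
  have "pd_differentiable_upto n U (pd i (\<lambda>y. f y * g y))" for i
    by (rule pd_differentiable_upto_cong[OF assms(1) leibniz]) (simp add: pd_prod)
  with f g show ?case
    by (simp add: pd_differentiable_upto_Suc differentiable_on_mult)
qed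

lemma pd_differentiable_upto_const: "pd_differentiable_upto n U (\<lambda>y. c)"
proof (induction n arbitrary: c)
  case 0
  then show ?case by (simp add: pd_differentiable_upto_0)
next
  case (Suc n)
  then show ?case by (simp add: pd_differentiable_upto_Suc pd_const)
qed

lemma smooth_on_open_add:
  "open U \<Longrightarrow> smooth_on_open U f \<Longrightarrow> smooth_on_open U g \<Longrightarrow> smooth_on_open U (\<lambda>y. f y + g y)"
  by (simp add: smooth_on_open_iff_pd_differentiable_upto pd_differentiable_upto_add)

lemma smooth_on_open_mult:
  "open U \<Longrightarrow> smooth_on_open U f \<Longrightarrow> smooth_on_open U g \<Longrightarrow> smooth_on_open U (\<lambda>y. f y * g y)"
  by (simp add: smooth_on_open_iff_pd_differentiable_upto pd_differentiable_upto_mult)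

lemma smooth_on_open_const: "smooth_on_open U (\<lambda>y. c)"
  by (simp add: smooth_on_open_iff_pd_differentiable_upto pd_differentiable_upto_const)

lemma smooth_on_open_diff:
  assumes "open U" "smooth_on_open U f" "smooth_on_open U g"
  shows "smooth_on_open U (\<lambda>y. f y - g y)"
  using smooth_on_open_add[OF assms(1,2) smooth_on_open_mult[OF assms(1) smooth_on_open_const assms(3)],
      of "-1"]
  by simp

lemma smooth_on_open_sum:
  assumes "open U" "finite S" "\<And>k. k \<in> S \<Longrightarrow> smooth_on_open U (f k)"
  shows "smooth_on_open U (\<lambda>y. \<Sum>k\<in>S. f k y)"
  using assms(2,3)
  by (induction S rule: finite_induct) (simp_all add: smooth_on_open_const smooth_on_open_add[OF assms(1)])

lemma smooth_on_open_divide_const: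
  "open U \<Longrightarrow> smooth_on_open U f \<Longrightarrow> smooth_on_open U (\<lambda>y. f y / r)"
  using smooth_on_open_mult[of U f "\<lambda>y. inverse r"] by (simp add: smooth_on_open_const divide_inverse)

lemma smooth_on_open_pd: "smooth_on_open U f \<Longrightarrow> smooth_on_open U (pd i f)"
  unfolding smooth_on_open_def iter_pd_snoc[symmetric] by blast

lemma smooth_on_open_differentiable:
  "open U \<Longrightarrow> smooth_on_open U f \<Longrightarrow> x \<in> U \<Longrightarrow> f differentiable (at x)"
  unfolding smooth_on_open_iff_pd_differentiable_upto
  using pd_differentiable_upto_0 differentiable_on_eq_differentiable_at by blast

lemmas smooth_on_open_intros =
  smooth_on_open_add smooth_on_open_diff smooth_on_open_mult smooth_on_open_const
  smooth_on_open_divide_const smooth_on_open_sum smooth_on_open_pd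

section \<open>Covariant derivatives of tensor products\<close>

lemma cov_Cons_cong:
  assumes "\<And>is. length is = length bs \<Longrightarrow> T is = S is"
  shows "cov Gam w T (a # bs) x = cov Gam w S (a # bs) x"
  using assms by (simp add: cov_def)

lemma cov_Cons_add:
  assumes "T bs differentiable (at x)" "S bs differentiable (at x)"
  shows "cov Gam w (\<lambda>is y. T is y + S is y) (a # bs) x = cov Gam w T (a # bs) x + cov Gam w S (a # bs) x"
  using assms by (simp add: cov_def pd_add sum.distrib add_divide_distrib algebra_simps)

lemma cov_Cons_cmult:
  assumes "T bs differentiable (at x)"
  shows "cov Gam w (\<lambda>is y. r * T is y) (a # bs) x = r * cov Gam w T (a # bs) x"
  using assms by (simp add: cov_def pd_cmult sum_distrib_left algebra_simps)

definition tensor_prod :: "nat \<Rightarrow> ('n list \<Rightarrow> real^'n::finite \<Rightarrow> real) \<Rightarrow> ('n list \<Rightarrow> real^'n \<Rightarrow> real)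
    \<Rightarrow> 'n list \<Rightarrow> real^'n \<Rightarrow> real" where
  "tensor_prod k T S = (\<lambda>is x. T (take k is) x * S (drop k is) x)"

lemma cov_tensor_prod:
  fixes Gam :: "'n::finite \<Rightarrow> 'n \<Rightarrow> 'n \<Rightarrow> real^'n \<Rightarrow> real"
  assumes "k \<le> length bs" "T (take k bs) differentiable (at x)" "S (drop k bs) differentiable (at x)"
  shows "cov Gam (v + w) (tensor_prod k T S) (a # bs) x
    = cov Gam v T (a # take k bs) x * S (drop k bs) x + T (take k bs) x * cov Gam w S (a # drop k bs) x"
proof -
  let ?\<Gamma>T = "\<lambda>j e. Gam a (bs ! j) e x * tensor_prod k T S (bs[j := e]) x"
  have split: "(\<Sum>j<length bs. f j) = (\<Sum>j<k. f j) + (\<Sum>j<length bs - k. f (k + j))" for f :: "nat \<Rightarrow> real"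
    using assms(1) sum.atLeastLessThan_concat[of 0 k "length bs" f] sum.atLeastLessThan_shift_0[of f k "length bs"]
    by (simp add: atLeast0LessThan o_def)
  have low: "(\<Sum>j<k. \<Sum>e\<in>UNIV. ?\<Gamma>T j e)
    = (\<Sum>j<length (take k bs). \<Sum>e\<in>UNIV. Gam a (take k bs ! j) e x * T ((take k bs)[j := e]) x)
      * S (drop k bs) x"
    using assms(1) by (simp add: tensor_prod_def take_update_swap sum_distrib_right min_absorb1 mult.assoc)
  have high: "(\<Sum>j<length bs - k. \<Sum>e\<in>UNIV. ?\<Gamma>T (k + j) e)
    = T (take k bs) x
      * (\<Sum>j<length (drop k bs). \<Sum>e\<in>UNIV. Gam a (drop k bs ! j) e x * S ((drop k bs)[j := e]) x)"
    by (simp add: tensor_prod_def drop_update_swap sum_distrib_left algebra_simps)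
  show ?thesis
    unfolding cov_def list.case split low high
    using assms(2,3) by (simp add: tensor_prod_def pd_mult add_divide_distrib algebra_simps)
qed

lemma cov_Cons3:
  fixes Gam :: "'n::finite \<Rightarrow> 'n \<Rightarrow> 'n \<Rightarrow> real^'n \<Rightarrow> real"
  shows "cov Gam w T [a, b, c] x = pd a (T [b, c]) x - (\<Sum>e\<in>UNIV. Gam a b e x * T [e, c] x)
    - (\<Sum>e\<in>UNIV. Gam a c e x * T [b, e] x) + w / (real CARD('n) + 1) * (\<Sum>e\<in>UNIV. Gam a e e x) * T [b, c] x"
  by (simp add: cov_def numeral_2_eq_2 lessThan_Suc algebra_simps)

lemma cov_ten2_transpose:
  "cov Gam w (ten2 (\<lambda>b c. F c b)) [a, b, c] x = cov Gam w (ten2 F) [a, c, b] x"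
  unfolding cov_Cons3 by (simp add: ten2_def)

lemma cov_ten2_symmetrization:
  fixes Gam :: "'n::finite \<Rightarrow> 'n \<Rightarrow> 'n \<Rightarrow> real^'n \<Rightarrow> real"
  assumes "F b c differentiable (at x)" "F c b differentiable (at x)"
  shows "cov Gam w (ten2 (\<lambda>b c y. (F b c y + F c b y) / 2)) [a, b, c] x
    = (cov Gam w (ten2 F) [a, b, c] x + cov Gam w (ten2 F) [a, c, b] x) / 2"
proof -
  let ?FT = "ten2 (\<lambda>b c. F c b)"
  have d: "ten2 F [b, c] differentiable (at x)" "?FT [b, c] differentiable (at x)"
    using assms by (simp_all add: ten2_def)
  have sym: "ten2 (\<lambda>b c y. (F b c y + F c b y) / 2) = (\<lambda>is y. 1/2 * (ten2 F is y + ?FT is y))"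
    by (simp add: ten2_def fun_eq_iff)
  have "cov Gam w (ten2 (\<lambda>b c y. (F b c y + F c b y) / 2)) [a, b, c] x
      = 1/2 * cov Gam w (\<lambda>is y. ten2 F is y + ?FT is y) [a, b, c] x"
    unfolding sym
    by (rule cov_Cons_cmult[where T = "\<lambda>is y. ten2 F is y + ?FT is y", OF differentiable_add[OF d]])
  also have "\<dots> = 1/2 * (cov Gam w (ten2 F) [a, b, c] x + cov Gam w ?FT [a, b, c] x)"
    by (simp only: cov_Cons_add[where T = "ten2 F" and S = ?FT, OF d])
  finally show ?thesis
    unfolding cov_ten2_transpose[of Gam w F] by simp
qed

lemma D2_eq_cov_D1: "D2 Gam tau = cov Gam 2 (D1 Gam tau)"
  by (simp add: D2_def D1_def)

lemma D3_eq_cov_D2: "D3 Gam tau = cov Gam 2 (D2 Gam tau)"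
  by (simp add: D3_def D2_def)

context
  fixes Gam :: "'n::finite \<Rightarrow> 'n \<Rightarrow> 'n \<Rightarrow> real^'n \<Rightarrow> real" and U tau
  assumes U: "open U" and Gam: "\<And>i j k. smooth_on_open U (Gam i j k)"
    and tau: "smooth_on_open U tau"
begin

lemma smooth_D1: "smooth_on_open U (D1 Gam tau [b])"
proof -
  have "D1 Gam tau [b] = (\<lambda>y. pd b tau y + 2 / (real CARD('n) + 1) * (\<Sum>e\<in>UNIV. Gam b e e y) * tau y)"
    by (simp add: D1_def cov_def scal_def fun_eq_iff)
  then show ?thesis
    by (simp only:) (intro smooth_on_open_intros U Gam tau finite)
qed

lemma smooth_D2: "smooth_on_open U (D2 Gam tau [a, b])"
proof -
  have "D2 Gam tau [a, b] = (\<lambda>y. pd a (D1 Gam tau [b]) y - (\<Sum>e\<in>UNIV. Gam a b e y * D1 Gam tau [e] y)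
      + 2 / (real CARD('n) + 1) * (\<Sum>e\<in>UNIV. Gam a e e y) * D1 Gam tau [b] y)"
    by (simp add: D2_eq_cov_D1 cov_def fun_eq_iff)
  then show ?thesis
    by (simp only:) (intro smooth_on_open_intros U Gam smooth_D1 finite)
qed

lemma smooth_Sch: "smooth_on_open U (Sch Gam b c)"
  unfolding Sch_def[abs_def] Ric_def[abs_def] Riem_def[abs_def]
  by (intro smooth_on_open_intros U Gam finite)

lemma smooth_kraw: "smooth_on_open U (kraw Gam tau b c)"
  unfolding kraw_def[abs_def] power2_eq_square
  by (intro smooth_on_open_intros U tau smooth_D1 smooth_D2 smooth_Sch)

lemma cov_tau_tensor_D2:
  assumes "x \<in> U"
  shows "cov Gam 4 (tensor_prod 0 (scal tau) (D2 Gam tau)) [a, b, c] x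
    = D1 Gam tau [a] x * D2 Gam tau [b, c] x + tau x * D3 Gam tau [a, b, c] x"
  using cov_tensor_prod[where k = 0 and bs = "[b, c]" and T = "scal tau" and S = "D2 Gam tau" and v = 2 and w = 2]
  by (simp add: D1_def D3_eq_cov_D2 scal_def smooth_on_open_differentiable[OF U _ assms] tau smooth_D2)

lemma cov_tau_squared_tensor_Sch:
  assumes "x \<in> U"
  shows "cov Gam 4 (tensor_prod 0 (tensor_prod 0 (scal tau) (scal tau)) (ten2 (Sch Gam))) [a, b, c] x
    = 2 * tau x * D1 Gam tau [a] x * Sch Gam b c x + (tau x)^2 * cov Gam 0 (ten2 (Sch Gam)) [a, b, c] x"
proof -
  note diff = smooth_on_open_differentiable[OF U _ assms]
  define tau2 where "tau2 = tensor_prod 0 (scal tau) (scal tau)"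
  have "cov Gam 4 tau2 [a] x = 2 * tau x * D1 Gam tau [a] x"
    using cov_tensor_prod[where k = 0 and bs = "[]" and T = "scal tau" and S = "scal tau" and v = 2 and w = 2]
    by (simp add: tau2_def D1_def scal_def diff tau)
  moreover have "tau2 [] differentiable (at x)"
    unfolding tau2_def tensor_prod_def scal_def by (intro differentiable_mult diff tau)
  ultimately show ?thesis
    using cov_tensor_prod[where k = 0 and bs = "[b, c]" and T = tau2 and S = "ten2 (Sch Gam)" and v = 4 and w = 0]
    by (simp add: ten2_def diff smooth_Sch tau2_def tensor_prod_def scal_def power2_eq_square)
qed

lemma cov_D1_tensor_D1:
  assumes "x \<in> U"
  shows "cov Gam 4 (tensor_prod 1 (D1 Gam tau) (D1 Gam tau)) [a, b, c] x
    = D2 Gam tau [a, b] x * D1 Gam tau [c] x + D1 Gam tau [b] x * D2 Gam tau [a, c] x"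
  using cov_tensor_prod[where k = 1 and bs = "[b, c]" and T = "D1 Gam tau" and S = "D1 Gam tau" and v = 2 and w = 2]
  by (simp add: D2_eq_cov_D1 smooth_on_open_differentiable[OF U _ assms] smooth_D1)

(* cov at a # [b, c] only sees index lists of length 2, on which kraw splits into tensor products. *)
lemma cov_kraw:
  assumes "x \<in> U"
  shows "cov Gam 4 (ten2 (kraw Gam tau)) [a, b, c] x
    = D1 Gam tau [a] x * D2 Gam tau [b, c] x + tau x * D3 Gam tau [a, b, c] x
      + 2 * (2 * tau x * D1 Gam tau [a] x * Sch Gam b c x + (tau x)^2 * cov Gam 0 (ten2 (Sch Gam)) [a, b, c] x)
      - 1/2 * (D2 Gam tau [a, b] x * D1 Gam tau [c] x + D1 Gam tau [b] x * D2 Gam tau [a, c] x)"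
proof -
  note diff = smooth_on_open_differentiable[OF U _ assms]
  define A where "A = tensor_prod 0 (scal tau) (D2 Gam tau)"
  define B where "B = tensor_prod 0 (tensor_prod 0 (scal tau) (scal tau)) (ten2 (Sch Gam))"
  define C where "C = tensor_prod 1 (D1 Gam tau) (D1 Gam tau)"
  have dA: "A [b, c] differentiable (at x)" and dB: "B [b, c] differentiable (at x)"
    and dC: "C [b, c] differentiable (at x)"
    unfolding A_def B_def C_def tensor_prod_def scal_def ten2_def
    by (auto intro!: differentiable_mult diff[OF tau] diff[OF smooth_D1] diff[OF smooth_D2] diff[OF smooth_Sch])
  have dB': "(\<lambda>y. 2 * B [b, c] y) differentiable (at x)"
    and dC': "(\<lambda>y. (-1/2) * C [b, c] y) differentiable (at x)"
    by (intro differentiable_mult differentiable_const dB dC)+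
  have "ten2 (kraw Gam tau) is = (\<lambda>y. A is y + (2 * B is y + (-1/2) * C is y))"
    if "length is = length [b, c]" for "is"
    using that
    by (auto simp: length_Suc_conv A_def B_def C_def tensor_prod_def scal_def ten2_def kraw_def
        fun_eq_iff power2_eq_square algebra_simps)
  then have "cov Gam 4 (ten2 (kraw Gam tau)) [a, b, c] x
      = cov Gam 4 (\<lambda>is y. A is y + (2 * B is y + (-1/2) * C is y)) [a, b, c] x"
    by (rule cov_Cons_cong)
  also have "\<dots> = cov Gam 4 A [a, b, c] x + (2 * cov Gam 4 B [a, b, c] x + (-1/2) * cov Gam 4 C [a, b, c] x)"
    by (simp only: cov_Cons_add[where T = A and S = "\<lambda>is y. 2 * B is y + (-1/2) * C is y",
            OF dA differentiable_add[OF dB' dC']]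
          cov_Cons_add[where T = "\<lambda>is y. 2 * B is y" and S = "\<lambda>is y. (-1/2) * C is y", OF dB' dC']
          cov_Cons_cmult[where T = B, OF dB] cov_Cons_cmult[where T = C, OF dC])
  finally show ?thesis
    unfolding A_def B_def C_def cov_tau_tensor_D2[OF assms] cov_tau_squared_tensor_Sch[OF assms]
      cov_D1_tensor_D1[OF assms]
    by simp
qed

end

section \<open>Contractions along weighted geodesics\<close>

lemma sum_rotate3:
  "(\<Sum>x\<in>A. \<Sum>y\<in>B. \<Sum>z\<in>C. f x y z) = (\<Sum>y\<in>B. \<Sum>z\<in>C. \<Sum>x\<in>A. f x y z)"
  by (subst sum.swap) (simp add: sum.swap[of _ _ A])

lemma cubic_form_sym3:
  fixes u :: "'n::finite \<Rightarrow> real"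
  shows "(\<Sum>a\<in>UNIV. \<Sum>b\<in>UNIV. \<Sum>c\<in>UNIV. u a * u b * u c * sym3 X a b c)
       = (\<Sum>a\<in>UNIV. \<Sum>b\<in>UNIV. \<Sum>c\<in>UNIV. u a * u b * u c * X a b c)"
proof -
  let ?S = "\<lambda>f. (\<Sum>a\<in>UNIV. \<Sum>b\<in>UNIV. \<Sum>c\<in>UNIV. u a * u b * u c * f a b c)"
  have acb: "?S (\<lambda>a b c. X a c b) = ?S X"
    by (rule sum.cong[OF refl], subst sum.swap) (simp add: algebra_simps)
  have bac: "?S (\<lambda>a b c. X b a c) = ?S X" by (subst sum.swap) (simp add: algebra_simps)
  have bca: "?S (\<lambda>a b c. X b c a) = ?S X" by (subst sum_rotate3) (simp add: algebra_simps)
  have cab: "?S (\<lambda>a b c. X c a b) = ?S X" by (subst (2) sum_rotate3) (simp add: algebra_simps)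
  have cba: "?S (\<lambda>a b c. X c b a) = ?S X"
    using bac by (subst sum_rotate3) (simp add: algebra_simps)
  have "?S (sym3 X) = (?S X + ?S (\<lambda>a b c. X a c b) + ?S (\<lambda>a b c. X b a c) + ?S (\<lambda>a b c. X b c a)
      + ?S (\<lambda>a b c. X c a b) + ?S (\<lambda>a b c. X c b a)) / 6"
    by (simp add: sym3_def sum.distrib[symmetric] sum_divide_distrib algebra_simps add_divide_distrib)
  then show ?thesis unfolding acb bac bca cab cba by simp
qed

lemma weighted_geod_acceleration:
  fixes Gam :: "'n::finite \<Rightarrow> 'n \<Rightarrow> 'n \<Rightarrow> real^'n \<Rightarrow> real"
  assumes "weighted_geod Gam U I c c' s u u'" "t \<in> I"
  shows "s t * u' t $ b = - (\<Sum>a\<in>UNIV. \<Sum>e\<in>UNIV. Gam a e b (c t) * u t $ a * u t $ e)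
    + 2 / (real CARD('n) + 1) * (\<Sum>a\<in>UNIV. (\<Sum>e\<in>UNIV. Gam a e e (c t)) * u t $ a) * u t $ b"
proof -
  define X where "X = (\<Sum>a\<in>UNIV. \<Sum>e\<in>UNIV. Gam a e b (c t) * c' t $ a * u t $ e)"
  define Y where "Y = (\<Sum>a\<in>UNIV. \<Sum>e\<in>UNIV. Gam a e e (c t) * c' t $ a)"
  have geod: "s t * (u' t $ b + X - 2 / (real CARD('n) + 1) * Y * u t $ b) = 0"
    using assms unfolding weighted_geod_def X_def Y_def by blast
  have u: "u t $ a = s t * c' t $ a" for a
    using assms unfolding weighted_geod_def by simp
  have "s t * X = (\<Sum>a\<in>UNIV. \<Sum>e\<in>UNIV. Gam a e b (c t) * u t $ a * u t $ e)"
    and "s t * Y = (\<Sum>a\<in>UNIV. (\<Sum>e\<in>UNIV. Gam a e e (c t)) * u t $ a)"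
    unfolding X_def Y_def u by (simp_all add: sum_distrib_left sum_distrib_right algebra_simps)
  moreover have "s t * u' t $ b = - (s t * X) + 2 / (real CARD('n) + 1) * (s t * Y) * u t $ b"
    using geod by (simp add: algebra_simps)
  ultimately show ?thesis by simp
qed

lemma contraction_acceleration:
  fixes u w G :: "'n::finite \<Rightarrow> real"
  assumes w: "\<And>b. w b = - (\<Sum>a\<in>UNIV. \<Sum>e\<in>UNIV. \<Gamma> a e b * u a * u e) + z * (\<Sum>a\<in>UNIV. G a * u a) * u b"
  shows "(\<Sum>b\<in>UNIV. \<Sum>c\<in>UNIV. w b * u c * K b c)
     = - (\<Sum>a\<in>UNIV. \<Sum>b\<in>UNIV. \<Sum>c\<in>UNIV. u a * u b * u c * (\<Sum>e\<in>UNIV. \<Gamma> a b e * K e c))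
       + z * (\<Sum>a\<in>UNIV. G a * u a) * (\<Sum>b\<in>UNIV. \<Sum>c\<in>UNIV. u b * u c * K b c)"
proof -
  define V where "V e = (\<Sum>c\<in>UNIV. u c * K e c)" for e
  have "(\<Sum>b\<in>UNIV. \<Sum>c\<in>UNIV. w b * u c * K b c) = (\<Sum>b\<in>UNIV. w b * V b)"
    by (simp add: V_def sum_distrib_left algebra_simps)
  also have "\<dots> = - (\<Sum>b\<in>UNIV. (\<Sum>a\<in>UNIV. \<Sum>e\<in>UNIV. \<Gamma> a e b * u a * u e) * V b)
      + z * (\<Sum>a\<in>UNIV. G a * u a) * (\<Sum>b\<in>UNIV. u b * V b)"
  proof -
    have "(\<Sum>b\<in>UNIV. w b * V b) = (\<Sum>b\<in>UNIV. - ((\<Sum>a\<in>UNIV. \<Sum>e\<in>UNIV. \<Gamma> a e b * u a * u e) * V b)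
        + (z * (\<Sum>a\<in>UNIV. G a * u a)) * (u b * V b))"
      by (rule sum.cong) (simp_all add: w algebra_simps)
    then show ?thesis
      by (simp only: sum.distrib sum_negf sum_distrib_left[symmetric])
  qed
  also have "(\<Sum>b\<in>UNIV. (\<Sum>a\<in>UNIV. \<Sum>e\<in>UNIV. \<Gamma> a e b * u a * u e) * V b)
      = (\<Sum>a\<in>UNIV. \<Sum>b\<in>UNIV. \<Sum>c\<in>UNIV. u a * u b * u c * (\<Sum>e\<in>UNIV. \<Gamma> a b e * K e c))"
  proof -
    have "(\<Sum>b\<in>UNIV. (\<Sum>a\<in>UNIV. \<Sum>e\<in>UNIV. \<Gamma> a e b * u a * u e) * V b)
        = (\<Sum>a\<in>UNIV. \<Sum>b\<in>UNIV. \<Sum>e\<in>UNIV. u a * u b * \<Gamma> a b e * V e)"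
      by (simp add: sum_distrib_right) (subst sum_rotate3, simp add: algebra_simps)
    also have "\<dots> = (\<Sum>a\<in>UNIV. \<Sum>b\<in>UNIV. \<Sum>c\<in>UNIV. u a * u b * u c * (\<Sum>e\<in>UNIV. \<Gamma> a b e * K e c))"
      unfolding V_def sum_distrib_left by (subst (2) sum.swap) (simp add: algebra_simps)
    finally show ?thesis .
  qed
  also have "(\<Sum>b\<in>UNIV. u b * V b) = (\<Sum>b\<in>UNIV. \<Sum>c\<in>UNIV. u b * u c * K b c)"
    by (simp add: V_def sum_distrib_left algebra_simps)
  finally show ?thesis .
qed

lemma contraction_derivative_identity:
  fixes u w G :: "'n::finite \<Rightarrow> real"
  assumes w: "\<And>b. w b = - (\<Sum>a\<in>UNIV. \<Sum>e\<in>UNIV. \<Gamma> a e b * u a * u e) + z * (\<Sum>a\<in>UNIV. G a * u a) * u b"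
  shows "(\<Sum>b\<in>UNIV. \<Sum>c\<in>UNIV. w b * u c * K b c + u b * w c * K b c + u b * u c * (\<Sum>a\<in>UNIV. u a * dK a b c))
    = (\<Sum>a\<in>UNIV. \<Sum>b\<in>UNIV. \<Sum>c\<in>UNIV. u a * u b * u c * (dK a b c - (\<Sum>e\<in>UNIV. \<Gamma> a b e * K e c)
         - (\<Sum>e\<in>UNIV. \<Gamma> a c e * K b e) + 2 * z * G a * K b c))"
proof -
  have right: "(\<Sum>b\<in>UNIV. \<Sum>c\<in>UNIV. u b * w c * K b c)
     = - (\<Sum>a\<in>UNIV. \<Sum>b\<in>UNIV. \<Sum>c\<in>UNIV. u a * u b * u c * (\<Sum>e\<in>UNIV. \<Gamma> a c e * K b e))
       + z * (\<Sum>a\<in>UNIV. G a * u a) * (\<Sum>b\<in>UNIV. \<Sum>c\<in>UNIV. u b * u c * K b c)"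
  proof -
    have transpose: "(\<Sum>b\<in>UNIV. \<Sum>c\<in>UNIV. u b * w c * K b c) = (\<Sum>b\<in>UNIV. \<Sum>c\<in>UNIV. w b * u c * K c b)"
      by (subst sum.swap) (simp add: algebra_simps)
    have swap_\<Gamma>: "(\<Sum>a\<in>UNIV. \<Sum>b\<in>UNIV. \<Sum>c\<in>UNIV. u a * u b * u c * (\<Sum>e\<in>UNIV. \<Gamma> a b e * K c e))
        = (\<Sum>a\<in>UNIV. \<Sum>b\<in>UNIV. \<Sum>c\<in>UNIV. u a * u b * u c * (\<Sum>e\<in>UNIV. \<Gamma> a c e * K b e))"
      by (rule sum.cong[OF refl], subst sum.swap) (simp add: algebra_simps)
    have swap_K: "(\<Sum>b\<in>UNIV. \<Sum>c\<in>UNIV. u b * u c * K c b) = (\<Sum>b\<in>UNIV. \<Sum>c\<in>UNIV. u b * u c * K b c)"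
      by (subst sum.swap) (simp add: algebra_simps)
    show ?thesis
      unfolding transpose contraction_acceleration[OF w, of "\<lambda>b c. K c b"] swap_\<Gamma> swap_K ..
  qed
  have split_left: "(\<Sum>b\<in>UNIV. \<Sum>c\<in>UNIV. w b * u c * K b c + u b * w c * K b c + u b * u c * (\<Sum>a\<in>UNIV. u a * dK a b c))
     = (\<Sum>b\<in>UNIV. \<Sum>c\<in>UNIV. w b * u c * K b c) + (\<Sum>b\<in>UNIV. \<Sum>c\<in>UNIV. u b * w c * K b c)
       + (\<Sum>b\<in>UNIV. \<Sum>c\<in>UNIV. u b * u c * (\<Sum>a\<in>UNIV. u a * dK a b c))"
    by (simp only: sum.distrib)
  have split_right: "(\<Sum>a\<in>UNIV. \<Sum>b\<in>UNIV. \<Sum>c\<in>UNIV. u a * u b * u c * (dK a b c - (\<Sum>e\<in>UNIV. \<Gamma> a b e * K e c)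
         - (\<Sum>e\<in>UNIV. \<Gamma> a c e * K b e) + 2 * z * G a * K b c))
     = (\<Sum>a\<in>UNIV. \<Sum>b\<in>UNIV. \<Sum>c\<in>UNIV. u a * u b * u c * dK a b c)
       - (\<Sum>a\<in>UNIV. \<Sum>b\<in>UNIV. \<Sum>c\<in>UNIV. u a * u b * u c * (\<Sum>e\<in>UNIV. \<Gamma> a b e * K e c))
       - (\<Sum>a\<in>UNIV. \<Sum>b\<in>UNIV. \<Sum>c\<in>UNIV. u a * u b * u c * (\<Sum>e\<in>UNIV. \<Gamma> a c e * K b e))
       + (\<Sum>a\<in>UNIV. \<Sum>b\<in>UNIV. \<Sum>c\<in>UNIV. u a * u b * u c * (2 * z * G a * K b c))"
    by (simp only: sum.distrib sum_subtractf right_diff_distrib distrib_left)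
  have derivative: "(\<Sum>b\<in>UNIV. \<Sum>c\<in>UNIV. u b * u c * (\<Sum>a\<in>UNIV. u a * dK a b c))
      = (\<Sum>a\<in>UNIV. \<Sum>b\<in>UNIV. \<Sum>c\<in>UNIV. u a * u b * u c * dK a b c)"
    by (subst sum_rotate3) (simp add: sum_distrib_left algebra_simps)
  have trace: "(\<Sum>a\<in>UNIV. \<Sum>b\<in>UNIV. \<Sum>c\<in>UNIV. u a * u b * u c * (2 * z * G a * K b c))
      = 2 * z * ((\<Sum>a\<in>UNIV. G a * u a) * (\<Sum>b\<in>UNIV. \<Sum>c\<in>UNIV. u b * u c * K b c))"
    unfolding sum_distrib_right unfolding sum_distrib_left by (simp add: algebra_simps)
  show ?thesis
    unfolding split_left split_right derivative trace contraction_acceleration[OF w] right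
    by (simp add: algebra_simps)
qed

lemma has_real_derivative_contraction:
  fixes K :: "'n::finite list \<Rightarrow> real^'n \<Rightarrow> real"
  assumes "(c has_vector_derivative c') (at t)" "(u has_vector_derivative u') (at t)"
    and "\<And>b e. K [b, e] differentiable (at (c t))"
  shows "((\<lambda>t. \<Sum>b\<in>UNIV. \<Sum>e\<in>UNIV. u t $ b * u t $ e * K [b, e] (c t)) has_real_derivative
      (\<Sum>b\<in>UNIV. \<Sum>e\<in>UNIV. (u' $ b * u t $ e + u t $ b * u' $ e) * K [b, e] (c t)
        + u t $ b * u t $ e * (\<Sum>a\<in>UNIV. c' $ a * pd a (K [b, e]) (c t)))) (at t)"
  by (intro DERIV_sum)
    (auto intro!: derivative_eq_intros has_real_derivative_vec_nth[OF assms(2)] pd_chain[OF assms(3,1)]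
      simp: algebra_simps)

(* Since u = s c', differentiation along the curve is s^-1 u^a nabla_a; the weight 4 of K
   compensates the weight -2 of each factor u. *)
lemma weighted_geod_has_derivative_contraction:
  fixes Gam :: "'n::finite \<Rightarrow> 'n \<Rightarrow> 'n \<Rightarrow> real^'n \<Rightarrow> real"
  assumes wg: "weighted_geod Gam U I c c' s u u'" and t: "t \<in> I"
    and dK: "\<And>b e. K [b, e] differentiable (at (c t))"
  shows "((\<lambda>t. \<Sum>b\<in>UNIV. \<Sum>e\<in>UNIV. u t $ b * u t $ e * K [b, e] (c t)) has_real_derivative
      (\<Sum>a\<in>UNIV. \<Sum>b\<in>UNIV. \<Sum>e\<in>UNIV. u t $ a * u t $ b * u t $ e * cov Gam 4 K [a, b, e] (c t)) / s t)
      (at t)"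
proof -
  have cd: "(c has_vector_derivative c' t) (at t)" and ud: "(u has_vector_derivative u' t) (at t)"
    and s: "s t \<noteq> 0" and u: "u t = s t *\<^sub>R c' t"
    using wg t unfolding weighted_geod_def by auto
  define F' where "F' = (\<Sum>b\<in>UNIV. \<Sum>e\<in>UNIV. (u' t $ b * u t $ e + u t $ b * u' t $ e) * K [b, e] (c t)
        + u t $ b * u t $ e * (\<Sum>a\<in>UNIV. c' t $ a * pd a (K [b, e]) (c t)))"
  have D: "((\<lambda>t. \<Sum>b\<in>UNIV. \<Sum>e\<in>UNIV. u t $ b * u t $ e * K [b, e] (c t)) has_real_derivative F') (at t)"
    unfolding F'_def by (rule has_real_derivative_contraction[where K = K, OF cd ud dK])
  have "s t * F' = (\<Sum>b\<in>UNIV. \<Sum>e\<in>UNIV. (s t * u' t $ b) * u t $ e * K [b, e] (c t)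
        + u t $ b * (s t * u' t $ e) * K [b, e] (c t)
        + u t $ b * u t $ e * (\<Sum>a\<in>UNIV. u t $ a * pd a (K [b, e]) (c t)))"
  proof -
    have chain: "s t * (\<Sum>a\<in>UNIV. c' t $ a * pd a (K [b, e]) (c t)) = (\<Sum>a\<in>UNIV. u t $ a * pd a (K [b, e]) (c t))"
      for b e by (simp add: sum_distrib_left u algebra_simps)
    have summand: "s t * ((u' t $ b * u t $ e + u t $ b * u' t $ e) * K [b, e] (c t)
          + u t $ b * u t $ e * (\<Sum>a\<in>UNIV. c' t $ a * pd a (K [b, e]) (c t)))
        = (s t * u' t $ b) * u t $ e * K [b, e] (c t) + u t $ b * (s t * u' t $ e) * K [b, e] (c t)
          + u t $ b * u t $ e * (\<Sum>a\<in>UNIV. u t $ a * pd a (K [b, e]) (c t))" for b e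
      unfolding chain[symmetric] by (simp add: algebra_simps)
    show ?thesis
      unfolding F'_def sum_distrib_left[of "s t"] by (rule sum.cong[OF refl])+ (rule summand)
  qed
  also have "\<dots> = (\<Sum>a\<in>UNIV. \<Sum>b\<in>UNIV. \<Sum>e\<in>UNIV. u t $ a * u t $ b * u t $ e * (pd a (K [b, e]) (c t)
        - (\<Sum>f\<in>UNIV. Gam a b f (c t) * K [f, e] (c t)) - (\<Sum>f\<in>UNIV. Gam a e f (c t) * K [b, f] (c t))
        + 2 * (2 / (real CARD('n) + 1)) * (\<Sum>f\<in>UNIV. Gam a f f (c t)) * K [b, e] (c t)))"
    by (rule contraction_derivative_identity[OF weighted_geod_acceleration[OF wg t]])
  also have "\<dots> = (\<Sum>a\<in>UNIV. \<Sum>b\<in>UNIV. \<Sum>e\<in>UNIV. u t $ a * u t $ b * u t $ e * cov Gam 4 K [a, b, e] (c t))"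
    unfolding cov_Cons3 by simp
  finally have "F' = (\<Sum>a\<in>UNIV. \<Sum>b\<in>UNIV. \<Sum>e\<in>UNIV. u t $ a * u t $ b * u t $ e * cov Gam 4 K [a, b, e] (c t)) / s t"
    using s by (simp add: field_simps)
  then show ?thesis
    using D by simp
qed

section \<open>The Killing tensor and the invariant along geodesics\<close>

lemma sym3_average_transpose: "sym3 (\<lambda>a b c. (X a b c + X a c b) / 2) a b c = sym3 X a b c"
  by (simp add: sym3_def field_simps)

lemma sym3_kraw_expansion:
  fixes p :: "'n \<Rightarrow> real"
  shows "sym3 (\<lambda>a b c. p a * q b c + t * r a b c + 2 * (2 * t * p a * S b c + t^2 * C a b c)
      - 1/2 * (q a b * p c + p b * q a c)) a b c
   = t * sym3 (\<lambda>a b c. r a b c + 4 * S a b * p c + 2 * t * C a b c) a b c"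
  by (simp add: sym3_def field_simps power2_eq_square)

lemma eta_formula_eq_contraction:
  fixes Gam :: "'n::finite \<Rightarrow> 'n \<Rightarrow> 'n \<Rightarrow> real^'n \<Rightarrow> real"
  shows "eta_formula Gam tau x v = (\<Sum>b\<in>UNIV. \<Sum>c\<in>UNIV. v $ b * v $ c * kten Gam tau [b, c] x)"
proof -
  have "(\<Sum>b\<in>UNIV. \<Sum>c\<in>UNIV. v $ b * v $ c * kten Gam tau [b, c] x)
      = ((\<Sum>b\<in>UNIV. \<Sum>c\<in>UNIV. v $ b * v $ c * kraw Gam tau b c x)
        + (\<Sum>b\<in>UNIV. \<Sum>c\<in>UNIV. v $ b * v $ c * kraw Gam tau c b x)) / 2"
    by (simp add: kten_def ten2_def sum.distrib[symmetric] sum_divide_distrib algebra_simps add_divide_distrib)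
  also have "(\<Sum>b\<in>UNIV. \<Sum>c\<in>UNIV. v $ b * v $ c * kraw Gam tau c b x)
      = (\<Sum>b\<in>UNIV. \<Sum>c\<in>UNIV. v $ b * v $ c * kraw Gam tau b c x)"
    by (subst sum.swap) (simp add: algebra_simps)
  finally have "(\<Sum>b\<in>UNIV. \<Sum>c\<in>UNIV. v $ b * v $ c * kten Gam tau [b, c] x)
      = (\<Sum>b\<in>UNIV. \<Sum>c\<in>UNIV. v $ b * v $ c * kraw Gam tau b c x)"
    by simp
  then show ?thesis
    by (simp add: kraw_def eta_formula_def power2_eq_square sum_product sum_distrib_left sum_distrib_right
        sum.distrib sum_subtractf algebra_simps)
qed

lemma eta_tractor_eq_eta_formula:
  fixes Gam :: "'n::finite \<Rightarrow> 'n \<Rightarrow> 'n \<Rightarrow> real^'n \<Rightarrow> real"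
  shows "eta_tractor Gam tau x v = eta_formula Gam tau x v"
  unfolding eta_tractor_def eta_formula_def
  by (simp add: UNIV_option_conv sum.reindex Sig_def Htr_def power2_eq_square sum_product
      sum_distrib_left sum_distrib_right sum.distrib[symmetric] sum_subtractf[symmetric] algebra_simps)

context
  fixes Gam :: "'n::finite \<Rightarrow> 'n \<Rightarrow> 'n \<Rightarrow> real^'n \<Rightarrow> real" and U tau
  assumes U: "open U" and Gam: "\<And>i j k. smooth_on_open U (Gam i j k)"
    and tau: "smooth_on_open U tau" and third_order: "third_order_eq Gam U tau"
begin

lemma Killing_kten:
  assumes "x \<in> U"
  shows "sym3 (\<lambda>a b c. cov Gam 4 (kten Gam tau) [a, b, c] x) a b c = 0"
proof -
  let ?CK = "\<lambda>a b c. cov Gam 4 (ten2 (kraw Gam tau)) [a, b, c] x"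
  have "kraw Gam tau b c differentiable (at x)" for b c
    using smooth_on_open_differentiable[OF U smooth_kraw[OF U Gam tau] assms] .
  then have "(\<lambda>a b c. cov Gam 4 (kten Gam tau) [a, b, c] x) = (\<lambda>a b c. (?CK a b c + ?CK a c b) / 2)"
    unfolding kten_def by (intro ext cov_ten2_symmetrization)
  then have "sym3 (\<lambda>a b c. cov Gam 4 (kten Gam tau) [a, b, c] x) a b c = sym3 ?CK a b c"
    by (simp add: sym3_average_transpose)
  also have "\<dots> = tau x * sym3 (\<lambda>a b c. D3 Gam tau [a, b, c] x + 4 * Sch Gam a b x * D1 Gam tau [c] x
       + 2 * tau x * cov Gam 0 (ten2 (Sch Gam)) [a, b, c] x) a b c"
    unfolding cov_kraw[OF U Gam tau assms]
    by (rule sym3_kraw_expansion[where p = "\<lambda>a. D1 Gam tau [a] x" and q = "\<lambda>a b. D2 Gam tau [a, b] x"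
          and r = "\<lambda>a b c. D3 Gam tau [a, b, c] x" and C = "\<lambda>a b c. cov Gam 0 (ten2 (Sch Gam)) [a, b, c] x"
          and S = "\<lambda>b c. Sch Gam b c x" and t = "tau x"])
  also have "\<dots> = 0"
    using third_order assms unfolding third_order_eq_def by simp
  finally show ?thesis .
qed

lemma eta_formula_has_derivative_zero:
  assumes wg: "weighted_geod Gam U I c c' s u u'" and t: "t \<in> I"
  shows "((\<lambda>t. eta_formula Gam tau (c t) (u t)) has_real_derivative 0) (at t)"
proof -
  have ct: "c t \<in> U"
    using wg t unfolding weighted_geod_def by blast
  have "smooth_on_open U (kten Gam tau [b, e])" for b e
    unfolding kten_def ten2_def
    by (simp, intro smooth_on_open_intros U smooth_kraw[OF U Gam tau])
  then have dK: "kten Gam tau [b, e] differentiable (at (c t))" for b e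
    using smooth_on_open_differentiable[OF U _ ct] by blast
  have cubic: "(\<Sum>a\<in>UNIV. \<Sum>b\<in>UNIV. \<Sum>e\<in>UNIV.
      u t $ a * u t $ b * u t $ e * cov Gam 4 (kten Gam tau) [a, b, e] (c t)) = 0"
    using cubic_form_sym3[of "\<lambda>a. u t $ a" "\<lambda>a b e. cov Gam 4 (kten Gam tau) [a, b, e] (c t)"]
    by (simp add: Killing_kten[OF ct])
  show ?thesis
    using weighted_geod_has_derivative_contraction[where K = "kten Gam tau", OF wg t dK]
    unfolding cubic eta_formula_eq_contraction by simp
qed

lemma eta_formula_constant_along_weighted_geod:
  assumes wg: "weighted_geod Gam U I c c' s u u'" and "is_interval I" "t1 \<in> I" "t2 \<in> I"
  shows "eta_formula Gam tau (c t1) (u t1) = eta_formula Gam tau (c t2) (u t2)"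
proof -
  have "\<exists>C. \<forall>t\<in>I. eta_formula Gam tau (c t) (u t) = C"
  proof (rule has_field_derivative_zero_constant)
    show "convex I"
      using \<open>is_interval I\<close> by (rule is_interval_convex)
  next
    fix t assume "t \<in> I"
    with wg show "((\<lambda>t. eta_formula Gam tau (c t) (u t)) has_field_derivative 0) (at t within I)"
      by (intro has_field_derivative_at_within[OF eta_formula_has_derivative_zero])
  qed
  then show ?thesis
    using \<open>t1 \<in> I\<close> \<open>t2 \<in> I\<close> by metis
qed

end

theorem mainTheorem15:
  fixes Gam :: "'n::finite \<Rightarrow> 'n \<Rightarrow> 'n \<Rightarrow> real^'n \<Rightarrow> real"
    and U :: "(real^'n) set"
    and tau :: "real^'n \<Rightarrow> real"
  assumes "CARD('n) \<ge> 2"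
    and "open U"
    and "\<forall>i j k. smooth_on_open U (Gam i j k)"
    and "\<forall>i j k. \<forall>x\<in>U. Gam i j k x = Gam j i k x"
    and "smooth_on_open U tau"
    and "third_order_eq Gam U tau"
  shows "(\<forall>I c c' s u u'. open I \<and> is_interval I \<and> weighted_geod Gam U I c c' s u u' \<longrightarrow>
            (\<forall>t\<in>I. eta_tractor Gam tau (c t) (u t) = eta_formula Gam tau (c t) (u t)) \<and>
            (\<forall>t1\<in>I. \<forall>t2\<in>I. eta_formula Gam tau (c t1) (u t1) = eta_formula Gam tau (c t2) (u t2)))
       \<and> (\<forall>x\<in>U. \<forall>a b c. sym3 (\<lambda>a b c. cov Gam 4 (kten Gam tau) [a, b, c] x) a b c = 0)"
proof -
  have Gam: "\<And>i j k. smooth_on_open U (Gam i j k)"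
    using assms(3) by blast
  note eta_constant = eta_formula_constant_along_weighted_geod[OF assms(2) Gam assms(5,6)]
  show ?thesis
    by (intro conjI allI impI ballI eta_tractor_eq_eta_formula eta_constant
        Killing_kten[OF assms(2) Gam assms(5,6)]) auto
qed

end
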